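(* Let $n$ be a nonnegative integer and let $a,c\in\mathbb{C}$ be such that all hypergeometric series and quotients below are defined (no lower parameter is zero or a negative integer). Then \[ {}_3F_2\!\left(\left.{-2n,a,c \atop \frac{a}{2}-n,\frac{a+1}{2}-n}\right| \frac{1}{4}\right) =\frac{(-1)^n(2n)!\,(c)_n}{n!\,(1-a)_{2n}}\, {}_3F_2\!\left(\left.{-n,1+c-a+n,a-c-n \atop \frac{1}{2},1-c-n}\right| \frac{1}{4}\right) \] and \[ {}_3F_2\!\left(\left.{-2n-1,a,c \atop \frac{a-1}{2}-n,\frac{a}{2}-n}\right| \frac{1}{4}\right) =\frac{(-1)^n(1+c-a+n)(2n+1)!\,(c)_n}{n!\,(1-a)_{2n+1}}\, {}_3F_2\!\left(\left.{-n,2+c-a+n,a-c-n \atop \frac{3}{2},1-c-n}\right| \frac{1}{4}\right). \]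
   Context: For $a\in\mathbb{C}$, $(a)_0=1$ and $(a)_k=a(a+1)\cdots(a+k-1)$ for $k\ge1$. The hypergeometric series is ${}_rF_s\!\left(\left.{\alpha_1,\ldots,\alpha_r\atop \beta_1,\ldots,\beta_s}\right|z\right)=\sum_{k\ge0}\frac{(\alpha_1)_k\cdots(\alpha_r)_k}{k!(\beta_1)_k\cdots(\beta_s)_k}z^k$, with no lower parameter zero or a negative integer; when an upper parameter is $-n$ (or $-2n$, $-2n-1$) it is a finite sum. *)

theory Defs
  imports "HOL-Analysis.Analysis"
begin

text \<open>Generalized hypergeometric series rFs with upper parameters as and lower
parameters bs, defined as the (formal) infinite series; in all uses below one upper
parameter is a nonpositive integer so the series terminates.\<close>
definition hyperF :: "complex list \<Rightarrow> complex list \<Rightarrow> complex \<Rightarrow> complex" where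
  "hyperF as bs z =
     (\<Sum>k. (\<Prod>a\<leftarrow>as. pochhammer a k) / (fact k * (\<Prod>b\<leftarrow>bs. pochhammer b k)) * z ^ k)"

end

theory Submission
  imports Defs
begin

(* Write m = 2n + p with p in {0, 1}. Since (l)_k (l + 1/2)_k 4^k = (2l)_(2k) and 2l = a - m, the
   left-hand side is sum_k (-m)_k (a)_k (c)_k / (k! (a - m)_(2k)). On the right-hand side the
   reflection (c)_n = (-1)^j (c)_(n-j) (1 - c - n)_j cancels the lower parameter 1 - c - n, and the
   j-th term becomes a rational multiple of (c)_(n-j) (c + n - j + 1 - a)_(2j+p), which the
   Vandermonde convolution for rising factorials expands in the basis (c)_k. Both sides are then
   linear combinations of the (c)_k with coefficients free of c; on the right each coefficient is a
   terminating Chu-Vandermonde sum over j, evaluated separately for k <= n and for k > n. *)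

section \<open>Rising factorials\<close>

lemma fact_add_eq_fact_mult_pochhammer:
  "fact (s + i) = (fact s * pochhammer (of_nat s + 1) i :: 'a::{semiring_char_0,comm_semiring_1})"
  using pochhammer_product'[of "1::'a" s i] by (simp add: pochhammer_fact add_ac)

lemma pochhammer_of_nat_plus_one_neq_0: "pochhammer (of_nat e + 1 :: 'a::field_char_0) i \<noteq> 0"
  using fact_add_eq_fact_mult_pochhammer[of e i, where 'a='a] by (metis fact_nonzero mult_zero_right)

lemma pochhammer_neg_of_nat:
  assumes "i \<le> N"
  shows "pochhammer (- of_nat N) i = ((-1) ^ i * fact N / fact (N - i) :: 'a::field_char_0)"
proof -
  have "pochhammer (- of_nat N) i = (-1) ^ i * pochhammer (of_nat (N - i) + 1 :: 'a) i"
    using assms by (simp add: pochhammer_minus of_nat_diff)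
  moreover have "(fact N :: 'a) = fact (N - i) * pochhammer (of_nat (N - i) + 1) i"
    using fact_add_eq_fact_mult_pochhammer[of "N - i" i, where 'a='a] assms by simp
  ultimately show ?thesis
    by simp
qed

lemma pochhammer_split_reflected:
  fixes c :: "'a::comm_ring_1"
  assumes "j \<le> n"
  shows "pochhammer c n = (-1) ^ j * pochhammer c (n - j) * pochhammer (1 - c - of_nat n) j"
proof -
  have "pochhammer c n = pochhammer c (n - j) * pochhammer (c + of_nat (n - j)) j"
    using pochhammer_product'[of c "n - j" j] assms by simp
  moreover have "pochhammer (1 - c - of_nat n) j = (-1) ^ j * pochhammer (c + of_nat (n - j)) j"
    using pochhammer_minus[of "c + of_nat n - 1" j] assms by (simp add: algebra_simps of_nat_diff)
  ultimately show ?thesis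
    by (simp add: mult_ac flip: power_add mult_2)
qed

lemma pochhammer_neg_mult_pochhammer:
  "pochhammer (- u) j * pochhammer (u + 1) (j + p)
     = (-1) ^ j * pochhammer (u - of_nat j + 1) (2 * j + p)" for u :: "'a::comm_ring_1"
  using pochhammer_product'[of "u - of_nat j + 1" j "j + p"]
  by (simp add: pochhammer_minus mult_2 add_ac)

lemma fact_double_add:
  assumes "p \<le> 1"
  shows "fact j * pochhammer (of_nat p + 1 / 2) j * 4 ^ j = (fact (2 * j + p) :: 'a::field_char_0)"
proof (cases "p = 0")
  case True
  then show ?thesis by (simp add: fact_double power_mult)
next
  case False
  with assms have "p = 1" by simp
  have "pochhammer (2 * 1) (2 * j)
          = of_nat (2 ^ (2 * j)) * pochhammer 1 j * pochhammer (1 + 1 / 2 :: 'a) j"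
    by (rule pochhammer_double)
  with \<open>p = 1\<close> show ?thesis
    by (simp add: pochhammer_fact pochhammer_rec power_mult)
qed

lemma sum_atMost_supported_shift:
  fixes f :: "nat \<Rightarrow> 'a::comm_monoid_add"
  assumes "d + K \<le> n" and "\<And>j. j \<le> n \<Longrightarrow> f j \<noteq> 0 \<Longrightarrow> d \<le> j \<and> j \<le> d + K"
  shows "(\<Sum>j\<le>n. f j) = (\<Sum>i\<le>K. f (d + i))"
proof -
  have "(\<Sum>j\<le>n. f j) = (\<Sum>j\<in>{d..d + K}. f j)"
    by (rule sum.mono_neutral_right) (use assms in \<open>auto simp: not_le intro: ccontr\<close>)
  also have "\<dots> = (\<Sum>i\<le>K. f (d + i))"
    by (simp add: sum.atLeastAtMost_shift_0 atLeast0AtMost comp_def)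
  finally show ?thesis .
qed

lemma choose_div_fact_eq_pochhammer:
  assumes "i \<le> K"
  shows "(-1) ^ i * of_nat ((e + 2 * i) choose i) / (fact (K - i) * fact (e + 2 * i))
       = (pochhammer (- of_nat K) i / (fact K * fact e * fact i * pochhammer (of_nat e + 1) i)
            :: 'a::field_char_0)"
proof -
  have fact_shift: "(fact (e + i) :: 'a) = fact e * pochhammer (of_nat e + 1) i"
    by (rule fact_add_eq_fact_mult_pochhammer)
  have "(of_nat ((e + 2 * i) choose i) :: 'a) = fact (e + 2 * i) / (fact i * fact (e + i))"
    by (subst binomial_fact) (auto simp: add_ac mult_2)
  moreover have "((-1) ^ i * (-1) ^ i :: 'a) = 1"
    by (simp flip: power_add mult_2)
  ultimately show ?thesis
    using assms pochhammer_of_nat_plus_one_neq_0[of e i, where 'a='a]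
    by (simp add: pochhammer_neg_of_nat fact_shift field_simps)
qed

lemma Vandermonde_pochhammer_choose:
  fixes b :: "'a::field_char_0"
  shows "(\<Sum>i\<le>K. (-1) ^ i * of_nat ((e + 2 * i) choose i) / (fact (K - i) * fact (e + 2 * i))
                  * pochhammer b i)
       = pochhammer (of_nat e + 1 - b) K / (fact K * fact e * pochhammer (of_nat e + 1) K)"
proof -
  have no_pole: "\<forall>i\<in>{0..<K}. (of_nat e + 1 :: 'a) \<noteq> - of_nat i"
    using pochhammer_of_nat_plus_one_neq_0[of e K, where 'a='a] by (auto simp: pochhammer_eq_0_iff)
  have "(\<Sum>i\<le>K. (-1) ^ i * of_nat ((e + 2 * i) choose i) / (fact (K - i) * fact (e + 2 * i))
                  * pochhammer b i)
      = 1 / (fact K * fact e) * (\<Sum>i=0..K. pochhammer b i * pochhammer (- of_nat K) i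
                                             / (of_nat (fact i) * pochhammer (of_nat e + 1) i))"
    unfolding sum_distrib_left atLeast0AtMost
  proof (intro sum.cong refl)
    fix i
    assume "i \<in> {..K}"
    then have "i \<le> K"
      by simp
    then show "(-1) ^ i * of_nat ((e + 2 * i) choose i) / (fact (K - i) * fact (e + 2 * i))
                 * pochhammer b i
             = 1 / (fact K * fact e) * (pochhammer b i * pochhammer (- of_nat K) i
                                          / (of_nat (fact i) * pochhammer (of_nat e + 1) i))"
      unfolding choose_div_fact_eq_pochhammer[OF \<open>i \<le> K\<close>] by (simp add: ac_simps)
  qed
  also have "\<dots> = pochhammer (of_nat e + 1 - b) K / (fact K * fact e * pochhammer (of_nat e + 1) K)"
    unfolding Vandermonde_pochhammer[OF no_pole] by simp
  finally show ?thesis .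
qed

definition pochhammer_basis_coeff :: "nat \<Rightarrow> nat \<Rightarrow> 'a::comm_ring_1 \<Rightarrow> nat \<Rightarrow> 'a" where
  "pochhammer_basis_coeff r d b k =
     (if r \<le> k \<and> k \<le> r + d then of_nat (d choose (k - r)) * pochhammer b (r + d - k) else 0)"

lemma pochhammer_mult_pochhammer_expansion:
  fixes c b :: "'a::comm_ring_1"
  assumes "r + d \<le> N"
  shows "pochhammer c r * pochhammer (c + of_nat r + b) d
       = (\<Sum>k\<le>N. pochhammer c k * pochhammer_basis_coeff r d b k)"
proof -
  have "pochhammer c r * pochhammer (c + of_nat r + b) d
      = (\<Sum>i\<le>d. pochhammer c (r + i) * (of_nat (d choose i) * pochhammer b (d - i)))"
    by (simp add: pochhammer_binomial_sum sum_distrib_left pochhammer_product' mult_ac)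
  also have "\<dots> = (\<Sum>i\<le>d. pochhammer c (r + i) * pochhammer_basis_coeff r d b (r + i))"
    by (intro sum.cong refl) (simp add: pochhammer_basis_coeff_def)
  also have "\<dots> = (\<Sum>k\<le>N. pochhammer c k * pochhammer_basis_coeff r d b k)"
    by (rule sum_atMost_supported_shift[symmetric])
       (use assms in \<open>auto simp: pochhammer_basis_coeff_def split: if_splits\<close>)
  finally show ?thesis .
qed

section \<open>Coefficients of the reflected series in the basis of rising factorials\<close>

definition transform_weight :: "nat \<Rightarrow> nat \<Rightarrow> nat \<Rightarrow> 'a::field_char_0" where
  "transform_weight n p j = (-1) ^ j * fact n / (fact (n - j) * fact (2 * j + p))"

definition transform_coeff :: "nat \<Rightarrow> nat \<Rightarrow> 'a::field_char_0 \<Rightarrow> nat \<Rightarrow> 'a" where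
  "transform_coeff n p a k =
     (\<Sum>j\<le>n. transform_weight n p j * pochhammer_basis_coeff (n - j) (2 * j + p) (1 - a) k)"

lemma transform_coeff_low:
  fixes a :: "'a::field_char_0"
  shows "transform_coeff (k + r) p a k
       = (-1) ^ r * fact (k + r) * pochhammer (1 - a) (2 * r + p) * pochhammer a k
           / (fact k * fact (2 * r + p) * pochhammer (of_nat (2 * r + p) + 1) k)"
proof -
  define s where "s = 2 * r + p"
  define V where "V i = (-1) ^ i * of_nat ((s + 2 * i) choose i) / (fact (k - i) * fact (s + 2 * i))
                          * pochhammer (1 - a + of_nat s) i" for i
  have summand: "transform_weight (k + r) p (r + i)
                   * pochhammer_basis_coeff (k + r - (r + i)) (2 * (r + i) + p) (1 - a) k
                 = (-1) ^ r * fact (k + r) * pochhammer (1 - a) s * V i" if "i \<le> k" for i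
  proof -
    have idx: "k + r - (r + i) = k - i" "2 * (r + i) + p = s + 2 * i" "k - (k - i) = i"
      "k - i + (s + 2 * i) - k = s + i" "k - i \<le> k \<and> k \<le> k - i + (s + 2 * i)"
      using that by (auto simp: s_def)
    have "transform_weight (k + r) p (r + i)
            * pochhammer_basis_coeff (k + r - (r + i)) (2 * (r + i) + p) (1 - a) k
          = (-1) ^ (r + i) * fact (k + r) / (fact (k - i) * fact (s + 2 * i))
            * (of_nat ((s + 2 * i) choose i) * pochhammer (1 - a) (s + i))"
      unfolding transform_weight_def pochhammer_basis_coeff_def by (simp only: idx simp_thms if_True)
    then show ?thesis
      unfolding V_def pochhammer_product' by (simp add: power_add field_simps)
  qed
  have "transform_coeff (k + r) p a k
      = (\<Sum>i\<le>k. transform_weight (k + r) p (r + i)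
                   * pochhammer_basis_coeff (k + r - (r + i)) (2 * (r + i) + p) (1 - a) k)"
    unfolding transform_coeff_def
    by (rule sum_atMost_supported_shift) (auto simp: pochhammer_basis_coeff_def split: if_splits)
  also have "\<dots> = (-1) ^ r * fact (k + r) * pochhammer (1 - a) s * (\<Sum>i\<le>k. V i)"
    unfolding sum_distrib_left by (rule sum.cong[OF refl], rule summand, simp)
  also have "(\<Sum>i\<le>k. V i) = pochhammer a k / (fact k * fact s * pochhammer (of_nat s + 1) k)"
    unfolding V_def Vandermonde_pochhammer_choose by simp
  finally show ?thesis
    unfolding s_def by (simp only: times_divide_eq_right)
qed

lemma transform_coeff_high:
  fixes a :: "'a::field_char_0"
  shows "transform_coeff (d + N) p a (N + 2 * d + p)
       = (-1) ^ d * fact (d + N) * pochhammer (of_nat (2 * d + p) + a) N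
           / (fact N * fact (2 * d + p) * pochhammer (of_nat (2 * d + p) + 1) N)"
proof -
  define e where "e = 2 * d + p"
  define k where "k = N + 2 * d + p"
  define V where "V i = (-1) ^ i * of_nat ((e + 2 * i) choose i) / (fact (N - i) * fact (e + 2 * i))
                          * pochhammer (1 - a) i" for i
  have summand: "transform_weight (d + N) p (d + i)
                   * pochhammer_basis_coeff (d + N - (d + i)) (2 * (d + i) + p) (1 - a) k
                 = (-1) ^ d * fact (d + N) * V i" if "i \<le> N" for i
  proof -
    have idx: "d + N - (d + i) = N - i" "2 * (d + i) + p = e + 2 * i" "k - (N - i) = e + i"
      "N - i + (e + 2 * i) - k = i" "N - i \<le> k \<and> k \<le> N - i + (e + 2 * i)"
      using that by (auto simp: k_def e_def)
    have "(e + 2 * i) choose (e + i) = (e + 2 * i) choose i"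
      by (subst binomial_symmetric) (auto simp: mult_2)
    then have "transform_weight (d + N) p (d + i)
                 * pochhammer_basis_coeff (d + N - (d + i)) (2 * (d + i) + p) (1 - a) k
               = (-1) ^ (d + i) * fact (d + N) / (fact (N - i) * fact (e + 2 * i))
                 * (of_nat ((e + 2 * i) choose i) * pochhammer (1 - a) i)"
      unfolding transform_weight_def pochhammer_basis_coeff_def by (simp only: idx simp_thms if_True)
    then show ?thesis
      unfolding V_def by (simp add: power_add field_simps)
  qed
  have "transform_coeff (d + N) p a k
      = (\<Sum>i\<le>N. transform_weight (d + N) p (d + i)
                   * pochhammer_basis_coeff (d + N - (d + i)) (2 * (d + i) + p) (1 - a) k)"
    unfolding transform_coeff_def
    by (rule sum_atMost_supported_shift)
       (auto simp: k_def pochhammer_basis_coeff_def split: if_splits)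
  also have "\<dots> = (-1) ^ d * fact (d + N) * (\<Sum>i\<le>N. V i)"
    unfolding sum_distrib_left by (rule sum.cong[OF refl], rule summand, simp)
  also have "(\<Sum>i\<le>N. V i)
      = pochhammer (of_nat e + a) N / (fact N * fact e * pochhammer (of_nat e + 1) N)"
    unfolding V_def Vandermonde_pochhammer_choose by simp
  finally show ?thesis
    unfolding k_def e_def by (simp only: times_divide_eq_right)
qed

lemma transform_coeff_eq:
  fixes a :: "'a::field_char_0"
  assumes "k \<le> 2 * n + p" "p \<le> 1" "pochhammer (a - of_nat (2 * n + p)) (2 * k) \<noteq> 0"
  shows "(-1) ^ n * fact (2 * n + p) / fact n * transform_coeff n p a k
       = pochhammer (1 - a) (2 * n + p) * pochhammer (- of_nat (2 * n + p)) k * pochhammer a k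
           / (fact k * pochhammer (a - of_nat (2 * n + p)) (2 * k))"
proof (cases "k \<le> n")
  case True
  then obtain r where n: "n = k + r"
    using le_Suc_ex by blast
  define m where "m = 2 * n + p"
  define s where "s = 2 * r + p"
  have m: "m = 2 * k + s" "m - k = s + k" "k \<le> m"
    by (simp_all add: m_def n s_def)
  have D: "pochhammer (a - of_nat m) (2 * k) \<noteq> 0"
    using assms(3) by (simp add: m_def)
  have Q: "pochhammer (1 - a) m = pochhammer (a - of_nat m) (2 * k) * pochhammer (1 - a) s"
    using pochhammer_split_reflected[of "2 * k" m "1 - a"] by (simp add: m)
  have Nm: "pochhammer (- of_nat m) k
      = (-1) ^ k * fact m / (fact s * pochhammer (of_nat s + 1 :: 'a) k)"
    using pochhammer_neg_of_nat[of k m, where 'a='a]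
      fact_add_eq_fact_mult_pochhammer[of s k, where 'a='a]
    by (simp add: m(2,3) add.commute)
  have C: "transform_coeff n p a k
      = (-1) ^ r * fact n * pochhammer (1 - a) s * pochhammer a k
          / (fact k * fact s * pochhammer (of_nat s + 1) k)"
    unfolding n s_def by (rule transform_coeff_low)
  have sign: "((-1) ^ n * (-1) ^ r :: 'a) = (-1) ^ k"
    by (simp add: n power_add flip: power_mult_distrib)
  have "(-1) ^ n * fact m / fact n * transform_coeff n p a k
      = ((-1) ^ n * (-1) ^ r) * fact m * pochhammer (1 - a) s * pochhammer a k
          / (fact k * fact s * pochhammer (of_nat s + 1) k)"
    unfolding C by simp
  also have "\<dots> = pochhammer (1 - a) m * pochhammer (- of_nat m) k * pochhammer a k
                   / (fact k * pochhammer (a - of_nat m) (2 * k))"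
    unfolding sign Q Nm using D pochhammer_of_nat_plus_one_neq_0[of s k, where 'a='a]
    by (simp add: field_simps)
  finally show ?thesis
    by (simp add: m_def)
next
  case False
  define d where "d = k - n - p"
  define N where "N = n - d"
  define e where "e = 2 * d + p"
  define m where "m = 2 * n + p"
  have nk: "n = d + N" "k = N + e" "m = e + 2 * N" "m - k = N"
    using False assms(1,2) by (auto simp: d_def N_def e_def m_def)
  have split: "pochhammer (a - of_nat m) (2 * k) = pochhammer (a - of_nat m) m * pochhammer a e"
    using pochhammer_product'[of "a - of_nat m" m e] by (simp add: nk add_ac)
  have D: "pochhammer (a - of_nat m) m * pochhammer a e \<noteq> 0"
    using assms(3) unfolding m_def[symmetric] split .
  have Q: "pochhammer (1 - a) m = (-1) ^ m * pochhammer (a - of_nat m) m"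
    using pochhammer_split_reflected[of m m "1 - a"] by simp
  have ak: "pochhammer a k = pochhammer a e * pochhammer (of_nat e + a) N"
    using pochhammer_product'[of a e N] by (simp add: nk add_ac)
  have Nm: "pochhammer (- of_nat m) k = (-1) ^ k * fact m / (fact N :: 'a)"
    using pochhammer_neg_of_nat[of k m, where 'a='a] by (simp add: nk)
  have fk: "(fact k :: 'a) = fact e * pochhammer (of_nat e + 1) N"
    using fact_add_eq_fact_mult_pochhammer[of e N] by (simp add: nk add.commute)
  have "pochhammer (1 - a) m * pochhammer (- of_nat m) k * pochhammer a k
                     / (fact k * pochhammer (a - of_nat m) (2 * k))
      = ((-1) ^ m * (-1) ^ k) * fact m * pochhammer (of_nat e + a) N
          / (fact N * fact e * pochhammer (of_nat e + 1) N)"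
    unfolding Q split ak Nm fk using D pochhammer_of_nat_plus_one_neq_0[of e N, where 'a='a]
    by (simp add: field_simps)
  also have "((-1) ^ m * (-1) ^ k :: 'a) = (-1) ^ n * (-1) ^ d"
    by (simp add: nk e_def power_add flip: power_mult_distrib)
  also have "(-1) ^ n * (-1) ^ d * fact m * pochhammer (of_nat e + a) N
               / (fact N * fact e * pochhammer (of_nat e + 1) N)
           = (-1) ^ n * fact m / fact n * transform_coeff n p a k"
    using transform_coeff_high[of d N p a] by (simp add: nk e_def add_ac)
  finally show ?thesis
    by (simp add: m_def)
qed

section \<open>Terminating series at argument 1/4\<close>

lemma hyperF_terminating:
  "hyperF (- of_nat M # as) bs z =
     (\<Sum>k\<le>M. pochhammer (- of_nat M) k * (\<Prod>a\<leftarrow>as. pochhammer a k)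
               / (fact k * (\<Prod>b\<leftarrow>bs. pochhammer b k)) * z ^ k)"
  unfolding hyperF_def by (subst suminf_finite[of "{..M}"]) (auto simp: pochhammer_of_nat_eq_0_iff)

lemma hyperF_duplicated_lower:
  "hyperF [- of_nat m, a, c] [l, l + 1 / 2] (1 / 4)
     = (\<Sum>k\<le>m. pochhammer (- of_nat m) k * pochhammer a k * pochhammer c k
                  / (fact k * pochhammer (2 * l) (2 * k)))"
  unfolding hyperF_terminating
proof (intro sum.cong refl)
  fix k
  have "pochhammer (2 * l) (2 * k) = 4 ^ k * (pochhammer l k * pochhammer (l + 1 / 2) k)"
    by (simp add: pochhammer_double power_mult)
  then show "pochhammer (- of_nat m) k * (\<Prod>x\<leftarrow>[a, c]. pochhammer x k)
               / (fact k * (\<Prod>x\<leftarrow>[l, l + 1 / 2]. pochhammer x k)) * (1 / 4) ^ k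
           = pochhammer (- of_nat m) k * pochhammer a k * pochhammer c k
               / (fact k * pochhammer (2 * l) (2 * k))"
    by (simp add: power_one_over mult_ac)
qed

lemma reflected_term_eq_weighted_pochhammer:
  fixes a c :: complex
  assumes "j \<le> n" "p \<le> 1" "pochhammer (1 - c - of_nat n) j \<noteq> 0"
  shows "(1 + c - a + of_nat n) ^ p * pochhammer c n
           * (pochhammer (- of_nat n) j * pochhammer (of_nat p + 1 + c - a + of_nat n) j
                * pochhammer (a - c - of_nat n) j
              / (fact j * (pochhammer (of_nat p + 1 / 2) j * pochhammer (1 - c - of_nat n) j))
              * (1 / 4) ^ j)
       = transform_weight n p j
           * (pochhammer c (n - j) * pochhammer (c + of_nat (n - j) + (1 - a)) (2 * j + p))"
proof -
  define u where "u = c - a + of_nat n"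
  define R where "R = pochhammer (1 - c - of_nat n) j"
  have params: "1 + c - a + of_nat n = 1 + u" "of_nat p + 1 + c - a + of_nat n = of_nat p + 1 + u"
    "a - c - of_nat n = - u"
    by (simp_all add: u_def algebra_simps)
  have "(1 + u) ^ p * pochhammer (of_nat p + 1 + u) j = pochhammer (u + 1) (j + p)"
    using pochhammer_product'[of "u + 1" p j] assms(2) by (cases p) (auto simp: add_ac)
  then have upper: "(1 + u) ^ p * pochhammer (of_nat p + 1 + u) j * pochhammer (- u) j
                      = (-1) ^ j * pochhammer (c + of_nat (n - j) + (1 - a)) (2 * j + p)"
    using pochhammer_neg_mult_pochhammer[of u j p] assms(1)
    by (simp add: u_def of_nat_diff algebra_simps)
  have lower: "fact j * pochhammer (of_nat p + 1 / 2) j * 4 ^ j = (fact (2 * j + p) :: complex)"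
    by (rule fact_double_add[OF assms(2)])
  have sign: "((-1) ^ j * (-1) ^ j :: complex) = 1"
    by (simp flip: power_add mult_2 power_mult)
  have "(1 + c - a + of_nat n) ^ p * pochhammer c n
           * (pochhammer (- of_nat n) j * pochhammer (of_nat p + 1 + c - a + of_nat n) j
                * pochhammer (a - c - of_nat n) j
              / (fact j * (pochhammer (of_nat p + 1 / 2) j * R)) * (1 / 4) ^ j)
      = ((1 + u) ^ p * pochhammer (of_nat p + 1 + u) j * pochhammer (- u) j)
          * pochhammer c n * pochhammer (- of_nat n) j
          / (fact j * pochhammer (of_nat p + 1 / 2) j * 4 ^ j * R)"
    unfolding params by (simp add: field_simps)
  also have "\<dots> = transform_weight n p j
                   * (pochhammer c (n - j) * pochhammer (c + of_nat (n - j) + (1 - a)) (2 * j + p))"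
    unfolding upper lower pochhammer_split_reflected[OF assms(1), of c] R_def[symmetric]
      pochhammer_neg_of_nat[OF assms(1)] transform_weight_def
    using sign assms(3)[folded R_def] by (simp add: field_simps)
  finally show ?thesis
    unfolding R_def .
qed

lemma hyperF_reflected_expansion:
  fixes a c :: complex
  assumes "p \<le> 1" "1 - c - of_nat n \<notin> \<int>\<^sub>\<le>\<^sub>0"
  shows "(1 + c - a + of_nat n) ^ p * pochhammer c n
           * hyperF [- of_nat n, of_nat p + 1 + c - a + of_nat n, a - c - of_nat n]
                    [of_nat p + 1 / 2, 1 - c - of_nat n] (1 / 4)
       = (\<Sum>k\<le>2 * n + p. pochhammer c k * transform_coeff n p a k)"
proof -
  let ?B = "\<lambda>j k. pochhammer_basis_coeff (n - j) (2 * j + p) (1 - a) k"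
  have "(1 + c - a + of_nat n) ^ p * pochhammer c n
           * hyperF [- of_nat n, of_nat p + 1 + c - a + of_nat n, a - c - of_nat n]
                    [of_nat p + 1 / 2, 1 - c - of_nat n] (1 / 4)
      = (\<Sum>j\<le>n. transform_weight n p j
                   * (pochhammer c (n - j) * pochhammer (c + of_nat (n - j) + (1 - a)) (2 * j + p)))"
    unfolding hyperF_terminating sum_distrib_left
  proof (intro sum.cong refl)
    fix j
    assume "j \<in> {..n}"
    moreover have "pochhammer (1 - c - of_nat n) j \<noteq> 0"
      using assms(2) by (auto dest: pochhammer_eq_0_imp_nonpos_Int)
    ultimately show "(1 + c - a + of_nat n) ^ p * pochhammer c n
        * (pochhammer (- of_nat n) j
             * (\<Prod>x\<leftarrow>[of_nat p + 1 + c - a + of_nat n, a - c - of_nat n]. pochhammer x j)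
           / (fact j * (\<Prod>x\<leftarrow>[of_nat p + 1 / 2, 1 - c - of_nat n]. pochhammer x j)) * (1 / 4) ^ j)
      = transform_weight n p j
          * (pochhammer c (n - j) * pochhammer (c + of_nat (n - j) + (1 - a)) (2 * j + p))"
      using reflected_term_eq_weighted_pochhammer[OF _ assms(1)] by (simp add: mult.assoc)
  qed
  also have "\<dots> = (\<Sum>j\<le>n. transform_weight n p j * (\<Sum>k\<le>2 * n + p. pochhammer c k * ?B j k))"
    by (intro sum.cong refl arg_cong2[where f = "(*)"] pochhammer_mult_pochhammer_expansion) auto
  also have "\<dots> = (\<Sum>k\<le>2 * n + p. pochhammer c k * transform_coeff n p a k)"
    unfolding transform_coeff_def sum_distrib_left
    by (subst sum.swap) (simp add: mult_ac)
  finally show ?thesis .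
qed

lemma hyperF_quarter_transformation:
  fixes n p :: nat and a c l :: complex
  assumes "p \<le> 1" and "1 - c - of_nat n \<notin> \<int>\<^sub>\<le>\<^sub>0"
    and "l \<notin> \<int>\<^sub>\<le>\<^sub>0" "l + 1 / 2 \<notin> \<int>\<^sub>\<le>\<^sub>0" "2 * l = a - of_nat (2 * n + p)"
    and "pochhammer (1 - a) (2 * n + p) \<noteq> 0"
  shows "hyperF [- of_nat (2 * n + p), a, c] [l, l + 1 / 2] (1 / 4)
       = (-1) ^ n * fact (2 * n + p) / (fact n * pochhammer (1 - a) (2 * n + p))
         * ((1 + c - a + of_nat n) ^ p * pochhammer c n
            * hyperF [- of_nat n, of_nat p + 1 + c - a + of_nat n, a - c - of_nat n]
                     [of_nat p + 1 / 2, 1 - c - of_nat n] (1 / 4))"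
proof -
  have no_pole: "pochhammer (a - of_nat (2 * n + p)) (2 * k) \<noteq> 0" for k
  proof -
    have "pochhammer l k * pochhammer (l + 1 / 2) k \<noteq> 0"
      using assms(3,4) by (auto dest: pochhammer_eq_0_imp_nonpos_Int)
    then show ?thesis
      unfolding assms(5)[symmetric] pochhammer_double by simp
  qed
  show ?thesis
    unfolding hyperF_duplicated_lower hyperF_reflected_expansion[OF assms(1,2)] sum_distrib_left
      assms(5)
  proof (intro sum.cong refl)
    fix k
    assume "k \<in> {..2 * n + p}"
    then show "pochhammer (- of_nat (2 * n + p)) k * pochhammer a k * pochhammer c k
                 / (fact k * pochhammer (a - of_nat (2 * n + p)) (2 * k))
             = (-1) ^ n * fact (2 * n + p) / (fact n * pochhammer (1 - a) (2 * n + p))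
                 * (pochhammer c k * transform_coeff n p a k)"
      using transform_coeff_eq[of k n p a] assms(1,6) no_pole[of k] by (simp add: field_simps)
  qed
qed

theorem proposition5p2:
  fixes n :: nat and a c :: complex
  assumes hc: "1 - c - of_nat n \<notin> \<int>\<^sub>\<le>\<^sub>0"
  shows "(a / 2 - of_nat n \<notin> \<int>\<^sub>\<le>\<^sub>0 \<and> (a + 1) / 2 - of_nat n \<notin> \<int>\<^sub>\<le>\<^sub>0
            \<and> pochhammer (1 - a) (2 * n) \<noteq> 0 \<longrightarrow>
          hyperF [- of_nat (2 * n), a, c] [a / 2 - of_nat n, (a + 1) / 2 - of_nat n] (1 / 4)
          = (-1) ^ n * fact (2 * n) * pochhammer c n / (fact n * pochhammer (1 - a) (2 * n))
            * hyperF [- of_nat n, 1 + c - a + of_nat n, a - c - of_nat n] [1 / 2, 1 - c - of_nat n] (1 / 4))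
       \<and> ((a - 1) / 2 - of_nat n \<notin> \<int>\<^sub>\<le>\<^sub>0 \<and> a / 2 - of_nat n \<notin> \<int>\<^sub>\<le>\<^sub>0
            \<and> pochhammer (1 - a) (2 * n + 1) \<noteq> 0 \<longrightarrow>
          hyperF [- of_nat (2 * n + 1), a, c] [(a - 1) / 2 - of_nat n, a / 2 - of_nat n] (1 / 4)
          = (-1) ^ n * (1 + c - a + of_nat n) * fact (2 * n + 1) * pochhammer c n
              / (fact n * pochhammer (1 - a) (2 * n + 1))
            * hyperF [- of_nat n, 2 + c - a + of_nat n, a - c - of_nat n] [3 / 2, 1 - c - of_nat n] (1 / 4))"
proof -
  have even_shift: "a / 2 - of_nat n + 1 / 2 = (a + 1) / 2 - of_nat n"
    and odd_shift: "(a - 1) / 2 - of_nat n + 1 / 2 = a / 2 - of_nat n"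
    and odd_double: "2 * ((a - 1) / 2 - of_nat n) = a - of_nat (2 * n + 1)"
    by (simp_all add: field_simps)
  show ?thesis
    using hyperF_quarter_transformation[of 0 c n "a / 2 - of_nat n" a, unfolded even_shift]
      hyperF_quarter_transformation[of 1 c n "(a - 1) / 2 - of_nat n" a, unfolded odd_shift]
      hc odd_double
    by (simp add: add_ac)
qed

end
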